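(* Let $\mathbf{B}$ be a unital ring and $F\colon\mathfrak{XMod}\to\mathfrak{Mod}$ a module functor. Then $F$ is polynomial of degree at most $n$ if and only if the additive functor $\Phi(F)\colon\mathfrak{Laby}\to\mathfrak{Mod}$ vanishes on all finite sets with more than $n$ elements; equivalently, if and only if $\Phi(F)$ vanishes on all mazes with more than $n$ passages.
   Context: $\mathfrak{XMod}$: finitely generated free right $\mathbf{B}$-modules with right-module homomorphisms; $\mathfrak{Mod}$: all $\mathbf{B}$-modules; a module functor is any (not necessarily additive) functor $\mathfrak{XMod}\to\mathfrak{Mod}$. For homomorphisms $\alpha_1,\dots,\alpha_k$ with common source and target, $F(\alpha_1\diamond\cdots\diamond\alpha_k)=\sum_{I\subseteq\{1,\dots,k\}}(-1)^{k-|I|}F(\sum_{i\in I}\alpha_i)$. $F$ is polynomial of degree at most $n$ if $F(\alpha_1\diamond\cdots\diamond\alpha_{n+1})=0$ for all homomorphisms $\alpha_1,\dots,\alpha_{n+1}\colon M\to N$ and all $M,N$. For a finite set $X$, $\mathbf{B}^X$ has basis $(e_x)$; $b\sigma_{yx}\colon\mathbf{B}^X\to\mathbf{B}^Y$ is the map $e_x\mapsto e_yb$, $e_{x'}\mapsto 0$ ($x'\ne x$); $\pi_x=\sigma_{xx}$; $\mathrm{cr}_XF(\mathbf{B})=\operatorname{Im}F(\diamond_{x\in X}\pi_x)$. A passage $p\colon x\to y$ between elements of finite sets carries a label $\overline p\in\mathbf{B}$. A maze $P\colon X\to Y$ is a finite multi-set of passages from elements of $X$ to elements of $Y$ such that each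 element of $X$ is a source and each element of $Y$ a target of some passage. $\mathfrak{Laby}$ is the category whose objects are formal finite direct sums of finite sets and whose hom-group $\mathfrak{Laby}(X,Y)$ is generated by mazes $X\to Y$ modulo the relations $P\cup\{x\xrightarrow{0}y\}=0$ and $P\cup\{x\xrightarrow{a+b}y\}=P\cup\{x\xrightarrow{a}y\}+P\cup\{x\xrightarrow{b}y\}+P\cup\{x\xrightarrow{a}y,x\xrightarrow{b}y\}$ (for multi-sets of passages $P$), with composition $P\circ Q=\sum_{U\sqsubseteq P\boxtimes Q}U$, where $U$ ranges over sub-multi-sets of the multi-set of composable pairs $(p,q)$ ($q\colon x\to y\in Q$, $p\colon y\to z\in P$) using every passage occurrence of $P$ and of $Q$, and $U$ is read as the maze with passages $x\xrightarrow{\overline p\,\overline q}z$. $\Phi(F)\colon\mathfrak{Laby}\to\mathfrak{Mod}$ is the additive functor with $\Phi(F)(X)=\mathrm{cr}_XF(\mathbf{B})$ and $\Phi(F)(P)$ the restriction of $F(\diamond_{p\in P}\overline p\sigma_{y_px_p})$ (product over passage occurrences $p\colon x_p\to y_p$) to $\mathrm{cr}_XF(\mathbf{B})\to\mathrm{cr}_YF(\mathbf{B})$. *)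

theory Defs
  imports Main "HOL-Library.Multiset"
begin

text \<open>
  Model of XMod: the finitely generated free right B-module B^X, for X a finite
  set of natural numbers (every f.g. free module is isomorphic to one of these,
  so this full subcategory is equivalent to XMod).  A homomorphism
  B^X -> B^Y is a Y x X matrix A (entry A y x), acting on column vectors; it
  sends e_x to the sum of e_y (A y x).
\<close>

type_synonym 'b mat = "nat \<Rightarrow> nat \<Rightarrow> 'b"

definition hom :: "nat set \<Rightarrow> nat set \<Rightarrow> ('b::zero) mat set" where
  "hom X Y = {A. \<forall>y x. A y x \<noteq> 0 \<longrightarrow> y \<in> Y \<and> x \<in> X}"

definition idm :: "nat set \<Rightarrow> ('b::{zero,one}) mat" where
  "idm X = (\<lambda>y x. if x \<in> X \<and> y = x then 1 else 0)"

definition mcomp :: "nat set \<Rightarrow> ('b::semiring_0) mat \<Rightarrow> 'b mat \<Rightarrow> 'b mat" where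
  "mcomp Y A C = (\<lambda>z x. \<Sum>y\<in>Y. A z y * C y x)"

definition msum :: "'k set \<Rightarrow> ('k \<Rightarrow> ('b::comm_monoid_add) mat) \<Rightarrow> 'b mat" where
  "msum I \<alpha> = (\<lambda>y x. \<Sum>i\<in>I. \<alpha> i y x)"

definition sigma :: "'b \<Rightarrow> nat \<Rightarrow> nat \<Rightarrow> ('b::zero) mat" where
  "sigma b y x = (\<lambda>y' x'. if y' = y \<and> x' = x then b else 0)"

definition is_rmodule :: "('v::ab_group_add) set \<Rightarrow> ('v \<Rightarrow> 'b::ring_1 \<Rightarrow> 'v) \<Rightarrow> bool" where
  "is_rmodule M act \<longleftrightarrow>
     0 \<in> M \<and> (\<forall>v\<in>M. \<forall>w\<in>M. v + w \<in> M) \<and> (\<forall>v\<in>M. - v \<in> M) \<and>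
     (\<forall>v\<in>M. \<forall>b. act v b \<in> M) \<and>
     (\<forall>v\<in>M. \<forall>w\<in>M. \<forall>b. act (v + w) b = act v b + act w b) \<and>
     (\<forall>v\<in>M. \<forall>a b. act v (a + b) = act v a + act v b) \<and>
     (\<forall>v\<in>M. \<forall>a b. act v (a * b) = act (act v a) b) \<and>
     (\<forall>v\<in>M. act v 1 = v)"

text \<open>A (not necessarily additive) functor F : XMod -> Mod.  Fo X is the module F(B^X)
  (with action act X), Fm X Y A is F applied to A : B^X -> B^Y.\<close>
definition module_functor ::
  "(nat set \<Rightarrow> ('v::ab_group_add) set) \<Rightarrow> (nat set \<Rightarrow> 'v \<Rightarrow> 'b::ring_1 \<Rightarrow> 'v)
     \<Rightarrow> (nat set \<Rightarrow> nat set \<Rightarrow> 'b mat \<Rightarrow> 'v \<Rightarrow> 'v) \<Rightarrow> bool" where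
  "module_functor Fo act Fm \<longleftrightarrow>
     (\<forall>X. finite X \<longrightarrow> is_rmodule (Fo X) (act X)) \<and>
     (\<forall>X Y A. finite X \<and> finite Y \<and> A \<in> hom X Y \<longrightarrow>
        (\<forall>v\<in>Fo X. Fm X Y A v \<in> Fo Y) \<and>
        (\<forall>v\<in>Fo X. \<forall>w\<in>Fo X. Fm X Y A (v + w) = Fm X Y A v + Fm X Y A w) \<and>
        (\<forall>v\<in>Fo X. \<forall>b. Fm X Y A (act X v b) = act Y (Fm X Y A v) b)) \<and>
     (\<forall>X. finite X \<longrightarrow> (\<forall>v\<in>Fo X. Fm X X (idm X) v = v)) \<and>
     (\<forall>X Y Z A C. finite X \<and> finite Y \<and> finite Z \<and> C \<in> hom X Y \<and> A \<in> hom Y Z \<longrightarrow>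
        (\<forall>v\<in>Fo X. Fm X Z (mcomp Y A C) v = Fm Y Z A (Fm X Y C v)))"

definition sgnv :: "nat \<Rightarrow> 'v::ab_group_add \<Rightarrow> 'v" where
  "sgnv k v = (if even k then v else - v)"

definition diamond ::
  "(nat set \<Rightarrow> nat set \<Rightarrow> 'b mat \<Rightarrow> 'v \<Rightarrow> 'v) \<Rightarrow> nat set \<Rightarrow> nat set \<Rightarrow> 'k set
     \<Rightarrow> ('k \<Rightarrow> ('b::comm_monoid_add) mat) \<Rightarrow> 'v::ab_group_add \<Rightarrow> 'v" where
  "diamond Fm X Y K \<alpha> v = (\<Sum>I\<in>Pow K. sgnv (card K - card I) (Fm X Y (msum I \<alpha>) v))"

definition poly_deg_le ::
  "(nat set \<Rightarrow> ('v::ab_group_add) set) \<Rightarrow> (nat set \<Rightarrow> nat set \<Rightarrow> ('b::comm_monoid_add) mat \<Rightarrow> 'v \<Rightarrow> 'v)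
     \<Rightarrow> nat \<Rightarrow> bool" where
  "poly_deg_le Fo Fm n \<longleftrightarrow>
     (\<forall>X Y (\<alpha>::nat \<Rightarrow> 'b mat). finite X \<and> finite Y \<and> (\<forall>i<Suc n. \<alpha> i \<in> hom X Y) \<longrightarrow>
        (\<forall>v\<in>Fo X. diamond Fm X Y {..<Suc n} \<alpha> v = 0))"

text \<open>cr_X F(B) = Im F(<>_{x in X} pi_x), a subset of F(B^X).\<close>
definition cr ::
  "(nat set \<Rightarrow> ('v::ab_group_add) set) \<Rightarrow> (nat set \<Rightarrow> nat set \<Rightarrow> ('b::{comm_monoid_add,one}) mat \<Rightarrow> 'v \<Rightarrow> 'v)
     \<Rightarrow> nat set \<Rightarrow> 'v set" where
  "cr Fo Fm X = diamond Fm X X X (\<lambda>x. sigma 1 x x) ` Fo X"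

text \<open>Passages: (source, target, label).  A maze X -> Y is a finite multiset of passages.\<close>
type_synonym 'b passage = "nat \<times> nat \<times> 'b"

definition is_maze :: "nat set \<Rightarrow> nat set \<Rightarrow> 'b passage multiset \<Rightarrow> bool" where
  "is_maze X Y P \<longleftrightarrow>
     (\<forall>(x, y, b) \<in> set_mset P. x \<in> X \<and> y \<in> Y) \<and>
     (\<forall>x\<in>X. \<exists>(x', y, b) \<in> set_mset P. x' = x) \<and>
     (\<forall>y\<in>Y. \<exists>(x, y', b) \<in> set_mset P. y' = y)"

definition occs :: "'b passage multiset \<Rightarrow> ('b passage \<times> nat) set" where
  "occs P = {(p, j). p \<in># P \<and> j < count P p}"

definition passage_map :: "('b::zero) passage \<Rightarrow> 'b mat" where
  "passage_map p = (case p of (x, y, b) \<Rightarrow> sigma b y x)"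

text \<open>Phi(F)(P) (before restriction to cr_X): F(<>_{p in P} label(p) sigma_{y_p x_p}).\<close>
definition Phi_maze ::
  "(nat set \<Rightarrow> nat set \<Rightarrow> ('b::comm_monoid_add) mat \<Rightarrow> 'v \<Rightarrow> 'v) \<Rightarrow> nat set \<Rightarrow> nat set
     \<Rightarrow> 'b passage multiset \<Rightarrow> 'v::ab_group_add \<Rightarrow> 'v" where
  "Phi_maze Fm X Y P v = diamond Fm X Y (occs P) (\<lambda>q. passage_map (fst q)) v"

end

theory Submission
  imports Defs "HOL-Library.Nat_Bijection"
begin

text \<open>The cross effects \<open>F(\<alpha>\<^sub>1 \<diamond> \<dots> \<diamond> \<alpha>\<^sub>k)\<close> are alternating sums over subfamilies, i.e. iterated
  finite differences. If \<open>F\<close> has degree \<open>\<le> n\<close>, merging two members \<open>\<alpha>\<^sub>a, \<alpha>\<^sub>b\<close> into \<open>\<alpha>\<^sub>a + \<alpha>\<^sub>b\<close>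
  expresses a cross effect of \<open>k + 1\<close> maps by three of \<open>k\<close> maps, so all cross effects of more than
  \<open>n\<close> maps vanish; in particular on \<open>cr\<^sub>X F(B)\<close> for \<open>|X| > n\<close>, and on every maze with more than
  \<open>n\<close> passages. Conversely, \<open>n + 1\<close> maps \<open>B\<^sup>X \<rightarrow> B\<^sup>Y\<close> factor through \<open>B\<^bsup>X \<times> (n+1)\<^esup>\<close> so that
  their partial sums become images of sums of coordinate projections; by Moebius inversion
  \<open>F\<close> of such a projection is the sum of the cross effects along its subsets \<open>J\<close>, each of which
  factors through \<open>cr\<^sub>J F(B)\<close>. The alternating sum kills every \<open>J\<close> missing one of the
  \<open>n + 1\<close> copies, and the remaining ones have \<open>|J| > n\<close>. Finally, the maze of identity passages
  on \<open>X\<close> acts as the identity on \<open>cr\<^sub>X F(B)\<close>, which gives the maze criterion.\<close>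

lemma sgnv_Suc [simp]: "sgnv (Suc k) x = - sgnv k x"
  by (simp add: sgnv_def)

lemma sgnv_diff: "sgnv k (x - y) = sgnv k x - sgnv k y"
  by (simp add: sgnv_def)

lemma sgnv_zero [simp]: "sgnv k 0 = 0"
  by (simp add: sgnv_def)

lemma sgnv_sum: "sgnv k (sum f A) = (\<Sum>a\<in>A. sgnv k (f a))"
  by (simp add: sgnv_def sum_negf)

lemma inj_on_insert_Pow: "a \<notin> K \<Longrightarrow> inj_on (insert a) (Pow K)"
  by (intro inj_onI) (metis PowD insert_ident subsetD)

definition alternating_sum :: "'k set \<Rightarrow> ('k set \<Rightarrow> 'v::ab_group_add) \<Rightarrow> 'v" where
  "alternating_sum K h = (\<Sum>I\<in>Pow K. sgnv (card K - card I) (h I))"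

lemma diamond_eq_alternating_sum:
  "diamond Fm X Y K \<alpha> v = alternating_sum K (\<lambda>I. Fm X Y (msum I \<alpha>) v)"
  by (simp add: diamond_def alternating_sum_def)

lemma alternating_sum_cong:
  "(\<And>I. I \<subseteq> K \<Longrightarrow> h I = h' I) \<Longrightarrow> alternating_sum K h = alternating_sum K h'"
  unfolding alternating_sum_def by (rule sum.cong) auto

lemma alternating_sum_diff:
  "alternating_sum K (\<lambda>I. h I - h' I) = alternating_sum K h - alternating_sum K h'"
  unfolding alternating_sum_def by (simp add: sgnv_diff sum_subtractf)

lemma alternating_sum_zero [simp]: "alternating_sum K (\<lambda>_. 0) = 0"
  by (simp add: alternating_sum_def)

lemma alternating_sum_empty [simp]: "alternating_sum {} h = h {}"
  by (simp add: alternating_sum_def sgnv_def)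

lemma alternating_sum_sum:
  "alternating_sum K (\<lambda>I. \<Sum>j\<in>A. c I j) = (\<Sum>j\<in>A. alternating_sum K (\<lambda>I. c I j))"
  unfolding alternating_sum_def by (simp add: sgnv_sum sum.swap[of _ "Pow K"])

lemma alternating_sum_insert:
  assumes "finite K" "a \<notin> K"
  shows "alternating_sum (insert a K) h = alternating_sum K (\<lambda>I. h (insert a I) - h I)"
proof -
  have inj: "inj_on (insert a) (Pow K)"
    using assms(2) by (rule inj_on_insert_Pow)
  have card_with_a: "card (insert a K) - card (insert a I) = card K - card I"
    if "I \<subseteq> K" for I
  proof -
    have "finite I" "a \<notin> I"
      using that assms finite_subset by auto
    then show ?thesis
      using assms by simp
  qed
  have card_without_a: "card (insert a K) - card I = Suc (card K - card I)" if "I \<subseteq> K" for I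
    using that assms card_mono[OF assms(1) that] by (simp add: Suc_diff_le)
  have "alternating_sum (insert a K) h
      = (\<Sum>I\<in>Pow K. sgnv (card (insert a K) - card I) (h I))
        + (\<Sum>I\<in>insert a ` Pow K. sgnv (card (insert a K) - card I) (h I))"
    unfolding alternating_sum_def Pow_insert using assms
    by (intro sum.union_disjoint) auto
  also have "\<dots> = (\<Sum>I\<in>Pow K. - sgnv (card K - card I) (h I))
        + (\<Sum>I\<in>Pow K. sgnv (card K - card I) (h (insert a I)))"
    unfolding sum.reindex[OF inj] comp_def
    by (intro arg_cong2[where f = "(+)"] sum.cong) (simp_all add: card_with_a card_without_a)
  finally show ?thesis
    unfolding alternating_sum_def by (simp add: sgnv_diff sum_subtractf sum_negf)
qed

lemma alternating_sum_eq_0_if_independent: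
  assumes "finite K" "a \<in> K" "\<And>I. I \<subseteq> K - {a} \<Longrightarrow> h (insert a I) = h I"
  shows "alternating_sum K h = 0"
proof -
  have "alternating_sum K h = alternating_sum (K - {a}) (\<lambda>I. h (insert a I) - h I)"
    using alternating_sum_insert[of "K - {a}" a h] assms by (simp add: insert_absorb)
  also have "\<dots> = alternating_sum (K - {a}) (\<lambda>_. 0)"
    by (rule alternating_sum_cong) (simp add: assms)
  finally show ?thesis by simp
qed

lemma alternating_sum_indicator_top:
  assumes "finite K"
  shows "alternating_sum K (\<lambda>I. if I = K then u else 0) = u"
proof -
  have "alternating_sum K (\<lambda>I. if I = K then u else 0)
      = (\<Sum>I\<in>Pow K. if I = K then sgnv (card K - card I) u else 0)"
    unfolding alternating_sum_def by (rule sum.cong) auto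
  then show ?thesis
    using assms by (simp add: sum.delta' sgnv_def)
qed

lemma alternating_sum_insert2:
  assumes "finite K" "a \<notin> K" "b \<notin> K" "a \<noteq> b"
  shows "alternating_sum (insert a (insert b K)) f
    = alternating_sum K (\<lambda>I. f (insert a (insert b I)) - f I)
      - alternating_sum (insert a K) f - alternating_sum (insert b K) f"
proof -
  have "alternating_sum (insert a (insert b K)) f
      = alternating_sum K (\<lambda>I. (f (insert a (insert b I)) - f (insert b I)) - (f (insert a I) - f I))"
    using assms by (simp add: alternating_sum_insert insert_commute)
  also have "\<dots> = alternating_sum K (\<lambda>I. ((f (insert a (insert b I)) - f I)
      - (f (insert a I) - f I)) - (f (insert b I) - f I))"
    by (rule alternating_sum_cong) (simp add: algebra_simps)
  finally show ?thesis
    using assms by (simp add: alternating_sum_diff alternating_sum_insert)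
qed

lemma sum_Pow_alternating_sum:
  "finite T \<Longrightarrow> (\<Sum>J\<in>Pow T. alternating_sum J h) = h T"
proof (induction T arbitrary: h rule: finite_induct)
  case (insert t T)
  have inj: "inj_on (insert t) (Pow T)"
    using insert(2) by (rule inj_on_insert_Pow)
  have "(\<Sum>J\<in>Pow (insert t T). alternating_sum J h)
      = (\<Sum>J\<in>Pow T. alternating_sum J h) + (\<Sum>J\<in>Pow T. alternating_sum (insert t J) h)"
    unfolding Pow_insert using insert
    by (subst sum.union_disjoint) (auto simp: sum.reindex[OF inj])
  also have "(\<Sum>J\<in>Pow T. alternating_sum (insert t J) h)
      = (\<Sum>J\<in>Pow T. alternating_sum J (\<lambda>I. h (insert t I) - h I))"
    using insert by (intro sum.cong refl alternating_sum_insert) (auto intro: finite_subset)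
  finally show ?case
    using insert.IH by simp
qed simp

lemma alternating_sum_reindex:
  assumes "bij_betw g K' K"
  shows "alternating_sum K h = alternating_sum K' (\<lambda>I. h (g ` I))"
proof -
  have "card (g ` I) = card I" if "I \<subseteq> K'" for I
    using assms that by (meson bij_betw_def card_image inj_on_subset)
  then show ?thesis
    unfolding alternating_sum_def bij_betw_same_card[OF assms]
    by (subst sum.reindex_bij_betw[OF bij_betw_Pow[OF assms], symmetric]) simp
qed

definition add_subgroup :: "'v::ab_group_add set \<Rightarrow> bool" where
  "add_subgroup M \<longleftrightarrow> 0 \<in> M \<and> (\<forall>v\<in>M. \<forall>w\<in>M. v + w \<in> M) \<and> (\<forall>v\<in>M. - v \<in> M)"

definition additive_on :: "'a::ab_group_add set \<Rightarrow> ('a \<Rightarrow> 'c::ab_group_add) \<Rightarrow> bool" where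
  "additive_on M L \<longleftrightarrow> (\<forall>x\<in>M. \<forall>y\<in>M. L (x + y) = L x + L y)"

lemma add_subgroup_sum:
  "add_subgroup M \<Longrightarrow> (\<And>a. a \<in> A \<Longrightarrow> f a \<in> M) \<Longrightarrow> sum f A \<in> M"
  by (induction A rule: infinite_finite_induct) (auto simp: add_subgroup_def)

lemma add_subgroup_alternating_sum:
  assumes "add_subgroup M" "\<And>I. I \<subseteq> K \<Longrightarrow> h I \<in> M"
  shows "alternating_sum K h \<in> M"
  unfolding alternating_sum_def using assms
  by (intro add_subgroup_sum) (auto simp: add_subgroup_def sgnv_def)

lemma additive_on_zero:
  assumes "add_subgroup M" "additive_on M L"
  shows "L 0 = 0"
  using assms by (simp add: add_subgroup_def additive_on_def) (metis add_cancel_right_right)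

lemma additive_on_uminus:
  assumes "add_subgroup M" "additive_on M L" "x \<in> M"
  shows "L (- x) = - L x"
proof -
  have "L (x + - x) = L x + L (- x)"
    using assms unfolding add_subgroup_def additive_on_def by blast
  then show ?thesis
    using additive_on_zero[OF assms(1,2)] by (simp add: eq_neg_iff_add_eq_0 add.commute)
qed

lemma additive_on_sum:
  assumes "add_subgroup M" "additive_on M L" "\<And>a. a \<in> A \<Longrightarrow> f a \<in> M"
  shows "L (sum f A) = (\<Sum>a\<in>A. L (f a))"
  using assms(3)
proof (induction A rule: infinite_finite_induct)
  case (insert x F)
  then show ?case
    using assms(1,2) add_subgroup_sum[OF assms(1), of F f] by (simp add: additive_on_def)
qed (use additive_on_zero[OF assms(1,2)] in simp_all)

lemma additive_on_alternating_sum: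
  assumes "add_subgroup M" "additive_on M L" "\<And>I. I \<subseteq> K \<Longrightarrow> h I \<in> M"
  shows "L (alternating_sum K h) = alternating_sum K (\<lambda>I. L (h I))"
proof -
  have "L (sgnv k x) = sgnv k (L x)" if "x \<in> M" for k x
    using additive_on_uminus[OF assms(1,2) that] by (simp add: sgnv_def)
  moreover have "sgnv k (h I) \<in> M" if "I \<subseteq> K" for k I
    using assms(1) assms(3)[OF that] by (simp add: add_subgroup_def sgnv_def)
  ultimately show ?thesis
    unfolding alternating_sum_def using assms
    by (subst additive_on_sum[OF assms(1,2)]) auto
qed

lemma msum_hom: "(\<And>i. i \<in> I \<Longrightarrow> \<alpha> i \<in> hom X Y) \<Longrightarrow> msum I \<alpha> \<in> hom X Y"
  unfolding msum_def hom_def by (auto, (metis (mono_tags, lifting) sum.neutral)+)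

lemma mcomp_hom: "C \<in> hom X Y \<Longrightarrow> A \<in> hom Y Z \<Longrightarrow> mcomp Y A C \<in> hom X Z"
  unfolding mcomp_def hom_def by (auto, (metis (mono_tags, lifting) mult_not_zero sum.neutral)+)

lemma sigma_hom: "x \<in> X \<Longrightarrow> y \<in> Y \<Longrightarrow> sigma b y x \<in> hom X Y"
  unfolding sigma_def hom_def by auto

lemma idm_hom:
  assumes "J \<subseteq> Z"
  shows "idm J \<in> hom Z J" "idm J \<in> hom J Z"
  using assms unfolding idm_def hom_def by auto

lemma hom_add:
  fixes A B :: "'b::comm_monoid_add mat"
  shows "A \<in> hom X Y \<Longrightarrow> B \<in> hom X Y \<Longrightarrow> (\<lambda>y x. A y x + B y x) \<in> hom X Y"
proof -
  assume "A \<in> hom X Y" "B \<in> hom X Y"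
  moreover have "A y x \<noteq> 0 \<or> B y x \<noteq> 0" if "A y x + B y x \<noteq> 0" for y x
    using that by auto
  ultimately show ?thesis
    unfolding hom_def by blast
qed

lemma msum_reindex: "inj_on h I \<Longrightarrow> msum (h ` I) \<alpha> = msum I (\<alpha> \<circ> h)"
  unfolding msum_def by (auto simp: sum.reindex)

lemma msum_insert_merge:
  assumes "finite I" "a \<notin> I" "b \<notin> I" "a \<noteq> b"
  shows "msum (insert a I) (\<alpha>(a := (\<lambda>y x. \<alpha> a y x + \<alpha> b y x))) = msum (insert a (insert b I)) \<alpha>"
    and "msum I (\<alpha>(a := (\<lambda>y x. \<alpha> a y x + \<alpha> b y x))) = msum I \<alpha>"
proof -
  have "(\<Sum>i\<in>I. (\<alpha>(a := (\<lambda>y x. \<alpha> a y x + \<alpha> b y x))) i y x) = (\<Sum>i\<in>I. \<alpha> i y x)" for y x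
    using assms by (intro sum.cong) auto
  then show "msum (insert a I) (\<alpha>(a := (\<lambda>y x. \<alpha> a y x + \<alpha> b y x))) = msum (insert a (insert b I)) \<alpha>"
    and "msum I (\<alpha>(a := (\<lambda>y x. \<alpha> a y x + \<alpha> b y x))) = msum I \<alpha>"
    using assms by (simp_all add: msum_def add.assoc)
qed

lemma diamond_reindex:
  assumes "bij_betw h K' K"
  shows "diamond Fm X Y K \<alpha> v = diamond Fm X Y K' (\<alpha> \<circ> h) v"
  unfolding diamond_eq_alternating_sum alternating_sum_reindex[OF assms]
  using assms by (intro alternating_sum_cong) (metis bij_betw_def inj_on_subset msum_reindex)

text \<open>Merging the members \<open>a\<close> and \<open>b\<close> of the family into \<open>a + b\<close>: this is how the
  defining identity of degree \<open>\<le> n\<close> propagates to families of any size.\<close>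

lemma diamond_insert2:
  assumes "finite K" "a \<notin> K" "b \<notin> K" "a \<noteq> b"
  shows "diamond Fm X Y (insert a (insert b K)) \<alpha> v
    = diamond Fm X Y (insert a K) (\<alpha>(a := (\<lambda>y x. \<alpha> a y x + \<alpha> b y x))) v
      - diamond Fm X Y (insert a K) \<alpha> v - diamond Fm X Y (insert b K) \<alpha> v"
proof -
  define f where "f I = Fm X Y (msum I \<alpha>) v" for I
  have "diamond Fm X Y (insert a K) (\<alpha>(a := (\<lambda>y x. \<alpha> a y x + \<alpha> b y x))) v
      = alternating_sum K (\<lambda>I. f (insert a (insert b I)) - f I)"
    unfolding diamond_eq_alternating_sum alternating_sum_insert[OF assms(1,2)] f_def
  proof (intro alternating_sum_cong)
    fix I
    assume "I \<subseteq> K"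
    then have "finite I" "a \<notin> I" "b \<notin> I"
      using assms finite_subset by auto
    then show "Fm X Y (msum (insert a I) (\<alpha>(a := \<lambda>y x. \<alpha> a y x + \<alpha> b y x))) v
        - Fm X Y (msum I (\<alpha>(a := \<lambda>y x. \<alpha> a y x + \<alpha> b y x))) v
      = Fm X Y (msum (insert a (insert b I)) \<alpha>) v - Fm X Y (msum I \<alpha>) v"
      using msum_insert_merge[of I a b \<alpha>] assms(4) by simp
  qed
  then show ?thesis
    unfolding diamond_eq_alternating_sum f_def[symmetric]
    using alternating_sum_insert2[OF assms] by simp
qed

abbreviation proj :: "nat \<Rightarrow> ('b::{zero,one}) mat" where
  "proj x \<equiv> sigma 1 x x"

lemma msum_proj:
  assumes "finite T"
  shows "msum T proj y x = (if y \<in> T \<and> x = y then 1 else (0::'b::semiring_1))"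
proof -
  have "msum T proj y x = (\<Sum>i\<in>T. if i = y then (if x = y then 1 else 0) else (0::'b))"
    unfolding msum_def sigma_def by (intro sum.cong) auto
  then show ?thesis
    using assms by (simp add: sum.delta')
qed

lemma msum_proj_hom: "T \<subseteq> Z \<Longrightarrow> msum T proj \<in> hom Z Z"
  by (rule msum_hom) (auto intro: sigma_hom)

lemma idm_eq_msum_proj: "finite X \<Longrightarrow> idm X = (msum X proj :: 'b::semiring_1 mat)"
  unfolding idm_def by (intro ext) (simp add: msum_proj)

lemma mcomp_msum_proj_left:
  assumes "finite Y" "S \<subseteq> Y"
  shows "mcomp Y (msum S proj) A = (\<lambda>z x. if z \<in> S then A z x else (0::'b::semiring_1))"
proof (intro ext)
  fix z x
  have "mcomp Y (msum S proj) A z x = (\<Sum>y\<in>Y. if y = z then (if z \<in> S then A z x else 0) else 0)"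
    unfolding mcomp_def msum_proj[OF finite_subset[OF assms(2,1)]] by (intro sum.cong) auto
  then show "mcomp Y (msum S proj) A z x = (if z \<in> S then A z x else 0)"
    using assms by (auto simp: sum.delta')
qed

lemma mcomp_msum_proj:
  assumes "finite Y" "I \<subseteq> Y" "J \<subseteq> Y"
  shows "mcomp Y (msum I proj) (msum J proj) = (msum (I \<inter> J) proj :: 'b::semiring_1 mat)"
proof -
  have "finite J"
    using finite_subset[OF assms(3,1)] .
  then show ?thesis
    unfolding mcomp_msum_proj_left[OF assms(1,2)] by (intro ext) (simp add: msum_proj)
qed

lemma mcomp_idm_msum_proj_idm:
  assumes "finite J" "I \<subseteq> J"
  shows "mcomp J (idm J) (mcomp J (msum I proj) (idm J)) = (msum I proj :: 'b::semiring_1 mat)"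
  using assms by (simp add: idm_eq_msum_proj mcomp_msum_proj Int_absorb1 Int_absorb2)

text \<open>To rewrite \<open>F(\<Sum>i\<in>I. \<alpha> i)\<close> through projections, \<open>B\<^sup>X \<rightarrow> B\<^sup>Y\<close> is factored through
  \<open>B\<^bsup>X \<times> K\<^esup>\<close> (encoded in \<open>nat\<close>): first the diagonal \<open>e\<^sub>x \<mapsto> \<Sum>k\<in>K. e\<^sub>(\<^sub>x\<^sub>,\<^sub>k\<^sub>)\<close>,
  then the projection onto the copies indexed by \<open>I\<close>, then \<open>e\<^sub>(\<^sub>x\<^sub>,\<^sub>k\<^sub>) \<mapsto> \<alpha> k e\<^sub>x\<close>.\<close>

definition copies :: "nat set \<Rightarrow> nat set \<Rightarrow> nat set" where
  "copies X I = prod_encode ` (X \<times> I)"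

definition copy_index :: "nat \<Rightarrow> nat" where
  "copy_index z = snd (prod_decode z)"

definition diag_copies :: "nat set \<Rightarrow> nat set \<Rightarrow> ('b::{zero,one}) mat" where
  "diag_copies X K = (\<lambda>z x. if z \<in> copies X K \<and> fst (prod_decode z) = x then 1 else 0)"

definition apply_copies :: "nat set \<Rightarrow> nat set \<Rightarrow> (nat \<Rightarrow> ('b::zero) mat) \<Rightarrow> 'b mat" where
  "apply_copies X K \<alpha> =
     (\<lambda>y z. if z \<in> copies X K then \<alpha> (copy_index z) y (fst (prod_decode z)) else 0)"

lemma copies_mono: "I \<subseteq> K \<Longrightarrow> copies X I \<subseteq> copies X K"
  unfolding copies_def by auto

lemma finite_copies: "finite X \<Longrightarrow> finite K \<Longrightarrow> finite (copies X K)"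
  unfolding copies_def by simp

lemma diag_copies_hom: "diag_copies X K \<in> hom X (copies X K)"
  unfolding hom_def diag_copies_def copies_def by auto

lemma apply_copies_hom:
  assumes "\<And>i. i \<in> K \<Longrightarrow> \<alpha> i \<in> hom X Y"
  shows "apply_copies X K \<alpha> \<in> hom (copies X K) Y"
  using assms unfolding hom_def apply_copies_def copies_def copy_index_def
  by (fastforce split: if_splits)

lemma msum_factor_copies:
  fixes \<alpha> :: "nat \<Rightarrow> 'b::semiring_1 mat"
  assumes "finite X" "finite K" "I \<subseteq> K" "\<And>i. i \<in> K \<Longrightarrow> \<alpha> i \<in> hom X Y"
  shows "msum I \<alpha> = mcomp (copies X K) (apply_copies X K \<alpha>)
           (mcomp (copies X K) (msum (copies X I) proj) (diag_copies X K))"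
    (is "_ = mcomp ?Z ?\<gamma> (mcomp ?Z _ ?\<beta>)")
proof (intro ext)
  fix y x
  have fZ: "finite ?Z"
    using assms by (simp add: finite_copies)
  have inj: "inj_on prod_encode (X \<times> I)"
    using inj_prod_encode inj_on_subset by blast
  have "mcomp ?Z ?\<gamma> (mcomp ?Z (msum (copies X I) proj) ?\<beta>) y x
      = (\<Sum>z\<in>?Z. if z \<in> copies X I then ?\<gamma> y z * ?\<beta> z x else 0)"
    unfolding mcomp_msum_proj_left[OF fZ copies_mono[OF assms(3)]]
    unfolding mcomp_def by (intro sum.cong) auto
  also have "\<dots> = (\<Sum>z\<in>copies X I. ?\<gamma> y z * ?\<beta> z x)"
    using copies_mono[OF assms(3), of X] fZ by (simp add: sum.inter_restrict[symmetric] Int_absorb1)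
  also have "\<dots> = (\<Sum>p\<in>X \<times> I. \<alpha> (snd p) y (fst p) * (if fst p = x then 1 else 0))"
    unfolding copies_def sum.reindex[OF inj]
    using assms(3) by (intro sum.cong) (auto simp: apply_copies_def diag_copies_def copies_def copy_index_def)
  also have "\<dots> = (\<Sum>x'\<in>X. \<Sum>i\<in>I. \<alpha> i y x' * (if x' = x then 1 else 0))"
    by (simp add: sum.cartesian_product split_def)
  also have "\<dots> = (\<Sum>i\<in>I. \<Sum>x'\<in>X. \<alpha> i y x' * (if x' = x then 1 else 0))"
    by (rule sum.swap)
  also have "\<dots> = (\<Sum>i\<in>I. \<alpha> i y x)"
  proof (intro sum.cong refl)
    fix i
    assume "i \<in> I"
    then have "\<alpha> i \<in> hom X Y"
      using assms by blast
    have "(\<Sum>x'\<in>X. \<alpha> i y x' * (if x' = x then 1 else 0)) = (\<Sum>x'\<in>X. if x' = x then \<alpha> i y x else 0)"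
      by (intro sum.cong) auto
    also have "\<dots> = \<alpha> i y x"
      using assms(1) \<open>\<alpha> i \<in> hom X Y\<close> by (auto simp: sum.delta' hom_def)
    finally show "(\<Sum>x'\<in>X. \<alpha> i y x' * (if x' = x then 1 else 0)) = \<alpha> i y x" .
  qed
  finally show "msum I \<alpha> y x = mcomp ?Z ?\<gamma> (mcomp ?Z (msum (copies X I) proj) ?\<beta>) y x"
    by (simp add: msum_def)
qed

lemma subset_copies_insert_iff:
  assumes "i \<notin> copy_index ` J"
  shows "J \<subseteq> copies X (insert i I) \<longleftrightarrow> J \<subseteq> copies X I"
  using assms unfolding copies_def copy_index_def by force

lemma alternating_sum_subset_copies_indicator:
  assumes "finite K" "K \<subseteq> copy_index ` J \<Longrightarrow> c = 0"
  shows "alternating_sum K (\<lambda>I. if J \<subseteq> copies X I then c else 0) = 0"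
proof (cases "K \<subseteq> copy_index ` J")
  case True
  then have "(\<lambda>I. if J \<subseteq> copies X I then c else 0) = (\<lambda>_. 0)"
    using assms(2) by auto
  then show ?thesis
    by simp
next
  case False
  then obtain i where "i \<in> K" "i \<notin> copy_index ` J"
    by blast
  then show ?thesis
    using assms(1) subset_copies_insert_iff[of i J X] by (intro alternating_sum_eq_0_if_independent) auto
qed

lemma card_le_if_subset_copy_index:
  assumes "finite J" "K \<subseteq> copy_index ` J"
  shows "card K \<le> card J"
  using card_mono[OF finite_imageI[OF assms(1)] assms(2)] card_image_le[OF assms(1), of copy_index] by linarith

locale mod_functor =
  fixes Fo :: "nat set \<Rightarrow> 'v::ab_group_add set"
    and act :: "nat set \<Rightarrow> 'v \<Rightarrow> 'b::ring_1 \<Rightarrow> 'v"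
    and Fm :: "nat set \<Rightarrow> nat set \<Rightarrow> 'b mat \<Rightarrow> 'v \<Rightarrow> 'v"
  assumes module_functor: "module_functor Fo act Fm"
begin

lemma Fo_add_subgroup: "finite X \<Longrightarrow> add_subgroup (Fo X)"
  using module_functor[unfolded module_functor_def, THEN conjunct1, rule_format, of X]
  unfolding is_rmodule_def add_subgroup_def by blast

lemma Fm_in: "finite X \<Longrightarrow> finite Y \<Longrightarrow> A \<in> hom X Y \<Longrightarrow> v \<in> Fo X \<Longrightarrow> Fm X Y A v \<in> Fo Y"
  using module_functor[unfolded module_functor_def, THEN conjunct2, THEN conjunct1, rule_format,
      of X Y A]
  by blast

lemma Fm_additive: "finite X \<Longrightarrow> finite Y \<Longrightarrow> A \<in> hom X Y \<Longrightarrow> additive_on (Fo X) (Fm X Y A)"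
  using module_functor[unfolded module_functor_def, THEN conjunct2, THEN conjunct1, rule_format,
      of X Y A]
  unfolding additive_on_def by blast

lemma Fm_mcomp:
  "finite X \<Longrightarrow> finite Y \<Longrightarrow> finite Z \<Longrightarrow> C \<in> hom X Y \<Longrightarrow> A \<in> hom Y Z \<Longrightarrow> v \<in> Fo X
    \<Longrightarrow> Fm X Z (mcomp Y A C) v = Fm Y Z A (Fm X Y C v)"
  using module_functor[unfolded module_functor_def, THEN conjunct2, THEN conjunct2, THEN conjunct2,
      rule_format, of X Y Z C A]
  by blast

lemma Fm_zero: "finite X \<Longrightarrow> finite Y \<Longrightarrow> A \<in> hom X Y \<Longrightarrow> Fm X Y A 0 = 0"
  by (rule additive_on_zero[OF Fo_add_subgroup Fm_additive])

lemma Fm_alternating_sum: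
  "finite X \<Longrightarrow> finite Y \<Longrightarrow> A \<in> hom X Y \<Longrightarrow> (\<And>I. I \<subseteq> K \<Longrightarrow> h I \<in> Fo X)
    \<Longrightarrow> Fm X Y A (alternating_sum K h) = alternating_sum K (\<lambda>I. Fm X Y A (h I))"
  by (rule additive_on_alternating_sum[OF Fo_add_subgroup Fm_additive])

lemma diamond_in:
  "finite X \<Longrightarrow> finite Y \<Longrightarrow> (\<And>i. i \<in> K \<Longrightarrow> \<alpha> i \<in> hom X Y) \<Longrightarrow> v \<in> Fo X
    \<Longrightarrow> diamond Fm X Y K \<alpha> v \<in> Fo Y"
  unfolding diamond_eq_alternating_sum
  by (rule add_subgroup_alternating_sum[OF Fo_add_subgroup]) (auto intro: Fm_in msum_hom)

lemma diamond_eq_0_if_poly_deg_le: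
  assumes poly: "poly_deg_le Fo Fm n" and "finite X" "finite Y"
    and "finite K" "card K > n" "\<And>i. i \<in> K \<Longrightarrow> \<alpha> i \<in> hom X Y" "v \<in> Fo X"
  shows "diamond Fm X Y K \<alpha> v = 0"
proof -
  obtain d where "card K = Suc n + d"
    using \<open>card K > n\<close> less_iff_Suc_add by auto
  then show ?thesis
    using assms(4,6)
  proof (induction d arbitrary: K \<alpha>)
    case 0
    then obtain g where g: "bij_betw g {..<Suc n} K"
      by (metis ex_bij_betw_nat_finite lessThan_atLeast0 add_0_right)
    then have "\<forall>i<Suc n. (\<alpha> \<circ> g) i \<in> hom X Y"
      using 0 by (auto simp: bij_betw_def)
    then have "diamond Fm X Y {..<Suc n} (\<alpha> \<circ> g) v = 0"
      using poly assms(2,3,7) unfolding poly_deg_le_def by blast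
    then show ?case
      by (simp add: diamond_reindex[OF g])
  next
    case (Suc d)
    have "card K = Suc (Suc (n + d))"
      using Suc.prems(1) by simp
    then obtain a b K0 where K: "K = insert a (insert b K0)" and ab: "a \<notin> K0" "b \<notin> K0" "a \<noteq> b"
      and "card K0 = n + d"
      unfolding card_Suc_eq by blast
    have "finite K0"
      using Suc.prems(2) K by simp
    have hom: "\<And>i. i \<in> insert a (insert b K0) \<Longrightarrow> \<alpha> i \<in> hom X Y"
      using Suc.prems(3) K by simp
    have "diamond Fm X Y (insert a K0) (\<alpha>(a := (\<lambda>y x. \<alpha> a y x + \<alpha> b y x))) v = 0"
      by (rule Suc.IH) (use \<open>card K0 = n + d\<close> \<open>finite K0\<close> ab hom in \<open>auto intro: hom_add\<close>)
    moreover have "diamond Fm X Y (insert a K0) \<alpha> v = 0" "diamond Fm X Y (insert b K0) \<alpha> v = 0"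
      by (rule Suc.IH; use \<open>card K0 = n + d\<close> \<open>finite K0\<close> ab hom in auto)+
    ultimately show ?case
      unfolding K diamond_insert2[OF \<open>finite K0\<close> ab] by simp
  qed
qed

lemma cr_subset:
  assumes "finite X"
  shows "cr Fo Fm X \<subseteq> Fo X"
proof
  fix u
  assume "u \<in> cr Fo Fm X"
  then obtain w where "w \<in> Fo X" "u = diamond Fm X X X proj w"
    unfolding cr_def by blast
  then show "u \<in> Fo X"
    using assms by (simp add: diamond_in sigma_hom)
qed

lemma cr_eq_zero_iff:
  assumes "finite X"
  shows "cr Fo Fm X = {0} \<longleftrightarrow> (\<forall>u\<in>cr Fo Fm X. u = 0)"
proof -
  have "0 \<in> Fo X"
    using Fo_add_subgroup[OF assms] unfolding add_subgroup_def by simp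
  then have "cr Fo Fm X \<noteq> {}"
    unfolding cr_def by blast
  then show ?thesis
    by auto
qed

lemma cr_eq_zero_if_poly_deg_le:
  assumes "poly_deg_le Fo Fm n" "finite X" "card X > n"
  shows "cr Fo Fm X = {0}"
proof -
  have "diamond Fm X X X proj w = 0" if "w \<in> Fo X" for w
    using diamond_eq_0_if_poly_deg_le[OF assms(1,2,2,2,3) sigma_hom that] by simp
  then show ?thesis
    unfolding cr_eq_zero_iff[OF assms(2)] unfolding cr_def by auto
qed

text \<open>Since \<open>F(\<Sum>x\<in>I. \<pi>\<^sub>x) \<circ> F(\<Sum>x\<in>J. \<pi>\<^sub>x) = F(\<Sum>x\<in>I \<inter> J. \<pi>\<^sub>x)\<close>, after applying
  \<open>F(\<Sum>x\<in>I. \<pi>\<^sub>x)\<close> the alternating sum defining \<open>u\<close> no longer depends on the \<open>x \<notin> I\<close>.\<close>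

lemma Fm_msum_proj_cr:
  assumes "finite X" "I \<subseteq> X" "u \<in> cr Fo Fm X"
  shows "Fm X X (msum I proj) u = (if I = X then u else 0)"
proof -
  obtain w where w: "w \<in> Fo X" and u: "u = diamond Fm X X X proj w"
    using assms(3) unfolding cr_def by blast
  have "Fm X X (msum I proj) u = alternating_sum X (\<lambda>J. Fm X X (msum I proj) (Fm X X (msum J proj) w))"
    unfolding u diamond_eq_alternating_sum
    using assms(1,2) w by (intro Fm_alternating_sum) (auto intro: Fm_in msum_proj_hom)
  also have "\<dots> = alternating_sum X (\<lambda>J. Fm X X (msum (I \<inter> J) proj) w)"
  proof (intro alternating_sum_cong)
    fix J
    assume "J \<subseteq> X"
    then show "Fm X X (msum I proj) (Fm X X (msum J proj) w) = Fm X X (msum (I \<inter> J) proj) w"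
      using Fm_mcomp[OF assms(1,1,1) msum_proj_hom msum_proj_hom w, of J I]
      by (simp add: mcomp_msum_proj assms)
  qed
  also have "\<dots> = (if I = X then u else 0)"
  proof (cases "I = X")
    case True
    then show ?thesis
      unfolding u diamond_eq_alternating_sum by (auto intro!: alternating_sum_cong simp: Int_absorb1)
  next
    case False
    then obtain t where "t \<in> X" "t \<notin> I"
      using assms(2) by blast
    then have "alternating_sum X (\<lambda>J. Fm X X (msum (I \<inter> J) proj) w) = 0"
      using assms(1) by (intro alternating_sum_eq_0_if_independent) auto
    with False show ?thesis
      by simp
  qed
  finally show ?thesis .
qed

lemma diamond_proj_cr:
  assumes "finite X" "u \<in> cr Fo Fm X"
  shows "diamond Fm X X X proj u = u"
proof -
  have "diamond Fm X X X proj u = alternating_sum X (\<lambda>I. if I = X then u else 0)"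
    unfolding diamond_eq_alternating_sum
    by (intro alternating_sum_cong) (rule Fm_msum_proj_cr[OF assms(1) _ assms(2)])
  then show ?thesis
    using alternating_sum_indicator_top[OF assms(1)] by simp
qed

lemma diamond_proj_factor_cr:
  assumes "finite Z" "J \<subseteq> Z" "w \<in> Fo Z"
  shows "diamond Fm Z Z J proj w = Fm J Z (idm J) (diamond Fm J J J proj (Fm Z J (idm J) w))"
proof -
  have "finite J"
    using assms finite_subset by blast
  have idm: "idm J \<in> hom Z J" "idm J \<in> hom J Z"
    using assms(2) by (rule idm_hom)+
  have w': "Fm Z J (idm J) w \<in> Fo J"
    using Fm_in[OF assms(1) \<open>finite J\<close> idm(1) assms(3)] .
  have "Fm J Z (idm J) (diamond Fm J J J proj (Fm Z J (idm J) w))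
      = alternating_sum J (\<lambda>I. Fm J Z (idm J) (Fm J J (msum I proj) (Fm Z J (idm J) w)))"
    unfolding diamond_eq_alternating_sum using \<open>finite J\<close> idm(2) w'
    by (intro Fm_alternating_sum assms(1)) (auto intro: Fm_in msum_proj_hom)
  also have "\<dots> = alternating_sum J (\<lambda>I. Fm Z Z (msum I proj) w)"
  proof (intro alternating_sum_cong)
    fix I
    assume "I \<subseteq> J"
    then have proj: "msum I proj \<in> hom J J"
      by (rule msum_proj_hom)
    have "Fm Z Z (msum I proj) w = Fm Z Z (mcomp J (idm J) (mcomp J (msum I proj) (idm J))) w"
      by (simp add: mcomp_idm_msum_proj_idm[OF \<open>finite J\<close> \<open>I \<subseteq> J\<close>])
    also have "\<dots> = Fm J Z (idm J) (Fm J J (msum I proj) (Fm Z J (idm J) w))"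
      using Fm_mcomp[OF assms(1) \<open>finite J\<close> assms(1) mcomp_hom[OF idm(1) proj] idm(2) assms(3)]
        Fm_mcomp[OF assms(1) \<open>finite J\<close> \<open>finite J\<close> idm(1) proj assms(3)]
      by simp
    finally show "Fm J Z (idm J) (Fm J J (msum I proj) (Fm Z J (idm J) w)) = Fm Z Z (msum I proj) w"
      by simp
  qed
  finally show ?thesis
    unfolding diamond_eq_alternating_sum by simp
qed

lemma diamond_proj_eq_0_if_cr_zero:
  assumes "cr Fo Fm J = {0}" "finite Z" "J \<subseteq> Z" "w \<in> Fo Z"
  shows "diamond Fm Z Z J proj w = 0"
proof -
  have "finite J"
    using assms finite_subset by blast
  have "idm J \<in> hom Z J" "idm J \<in> hom J Z"
    using assms(3) by (rule idm_hom)+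
  then have "diamond Fm J J J proj (Fm Z J (idm J) w) \<in> cr Fo Fm J"
    unfolding cr_def using Fm_in \<open>finite J\<close> assms(2,4) by blast
  then show ?thesis
    using assms Fm_zero[OF \<open>finite J\<close> assms(2) \<open>idm J \<in> hom J Z\<close>]
    by (simp add: diamond_proj_factor_cr)
qed

lemma Fm_msum_proj_eq_sum_diamond:
  assumes "finite S"
  shows "Fm Z Z (msum S proj) w = (\<Sum>J\<in>Pow S. diamond Fm Z Z J proj w)"
  unfolding diamond_eq_alternating_sum sum_Pow_alternating_sum[OF assms] ..

lemma Fm_msum_via_copies:
  fixes X Y K I :: "nat set" and \<alpha> :: "nat \<Rightarrow> 'b mat" and v :: 'v
  defines "Z \<equiv> copies X K" and "w \<equiv> Fm X (copies X K) (diag_copies X K) v"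
  assumes X: "finite X" and Y: "finite Y" and "finite K" "I \<subseteq> K"
    and \<alpha>: "\<And>i. i \<in> K \<Longrightarrow> \<alpha> i \<in> hom X Y" and v: "v \<in> Fo X"
  shows "Fm X Y (msum I \<alpha>) v
    = Fm Z Y (apply_copies X K \<alpha>) (\<Sum>J\<in>Pow Z. if J \<subseteq> copies X I then diamond Fm Z Z J proj w else 0)"
proof -
  have "finite Z"
    using X \<open>finite K\<close> by (simp add: Z_def finite_copies)
  have S: "copies X I \<subseteq> Z"
    unfolding Z_def using \<open>I \<subseteq> K\<close> by (rule copies_mono)
  then have proj: "msum (copies X I) proj \<in> hom Z Z"
    by (rule msum_proj_hom)
  have diag: "diag_copies X K \<in> hom X Z"
    unfolding Z_def by (rule diag_copies_hom)
  have \<gamma>: "apply_copies X K \<alpha> \<in> hom Z Y"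
    unfolding Z_def using \<alpha> by (rule apply_copies_hom)
  have "Fm X Y (msum I \<alpha>) v
      = Fm X Y (mcomp Z (apply_copies X K \<alpha>) (mcomp Z (msum (copies X I) proj) (diag_copies X K))) v"
    using msum_factor_copies[OF X \<open>finite K\<close> \<open>I \<subseteq> K\<close> \<alpha>] by (simp add: Z_def)
  also have "\<dots> = Fm Z Y (apply_copies X K \<alpha>) (Fm Z Z (msum (copies X I) proj) w)"
    using Fm_mcomp[OF X \<open>finite Z\<close> Y mcomp_hom[OF diag proj] \<gamma> v]
      Fm_mcomp[OF X \<open>finite Z\<close> \<open>finite Z\<close> diag proj v]
    by (simp add: w_def Z_def)
  also have "Fm Z Z (msum (copies X I) proj) w = (\<Sum>J\<in>Pow (copies X I). diamond Fm Z Z J proj w)"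
    using S \<open>finite Z\<close> by (intro Fm_msum_proj_eq_sum_diamond) (rule finite_subset)
  also have "\<dots> = (\<Sum>J\<in>Pow Z. if J \<subseteq> copies X I then diamond Fm Z Z J proj w else 0)"
    using S \<open>finite Z\<close> by (intro sum.mono_neutral_cong_left) auto
  finally show ?thesis .
qed

lemma poly_deg_le_if_cr_zero:
  assumes cr_zero: "\<And>J. finite J \<Longrightarrow> card J > n \<Longrightarrow> cr Fo Fm J = {0}"
  shows "poly_deg_le Fo Fm n"
  unfolding poly_deg_le_def
proof (intro allI impI ballI)
  fix X Y :: "nat set" and \<alpha> :: "nat \<Rightarrow> 'b mat" and v
  assume "finite X \<and> finite Y \<and> (\<forall>i<Suc n. \<alpha> i \<in> hom X Y)" and v: "v \<in> Fo X"
  define K where "K = {..<Suc n}"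
  define Z where "Z = copies X K"
  define w where "w = Fm X Z (diag_copies X K) v"
  define g where "g J = diamond Fm Z Z J proj w" for J
  define h where "h I = (\<Sum>J\<in>Pow Z. if J \<subseteq> copies X I then g J else 0)" for I
  have X: "finite X" and Y: "finite Y" and \<alpha>: "\<And>i. i \<in> K \<Longrightarrow> \<alpha> i \<in> hom X Y"
    using \<open>finite X \<and> _\<close> by (auto simp: K_def)
  have "finite K" "finite Z"
    using X by (simp_all add: K_def Z_def finite_copies)
  have w: "w \<in> Fo Z"
    unfolding w_def Z_def by (rule Fm_in[OF X _ diag_copies_hom v]) (simp add: \<open>finite Z\<close>[unfolded Z_def])
  have g_zero: "g J = 0" if "J \<subseteq> Z" "K \<subseteq> copy_index ` J" for J
  proof -
    have "finite J"
      using that(1) \<open>finite Z\<close> finite_subset by blast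
    moreover have "card J > n"
      using card_le_if_subset_copy_index[OF \<open>finite J\<close> that(2)] by (simp add: K_def)
    ultimately show ?thesis
      unfolding g_def using cr_zero \<open>finite Z\<close> that(1) w by (intro diamond_proj_eq_0_if_cr_zero)
  qed
  have "alternating_sum K h = 0"
    unfolding h_def alternating_sum_sum using \<open>finite K\<close> g_zero
    by (intro sum.neutral ballI alternating_sum_subset_copies_indicator) auto
  moreover have "h I \<in> Fo Z" for I
    unfolding h_def g_def using \<open>finite Z\<close> w Fo_add_subgroup[OF \<open>finite Z\<close>]
    by (intro add_subgroup_sum) (auto simp: add_subgroup_def intro!: diamond_in sigma_hom)
  moreover have "apply_copies X K \<alpha> \<in> hom Z Y"
    unfolding Z_def using \<alpha> by (rule apply_copies_hom)
  ultimately have "alternating_sum K (\<lambda>I. Fm Z Y (apply_copies X K \<alpha>) (h I)) = 0"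
    using \<open>finite Z\<close> Y by (simp add: Fm_alternating_sum[symmetric] Fm_zero)
  moreover have "diamond Fm X Y K \<alpha> v = alternating_sum K (\<lambda>I. Fm Z Y (apply_copies X K \<alpha>) (h I))"
    unfolding diamond_eq_alternating_sum[of Fm X Y K \<alpha> v] h_def g_def w_def Z_def
    by (intro alternating_sum_cong) (simp add: Fm_msum_via_copies[OF X Y \<open>finite K\<close> _ \<alpha> v])
  ultimately show "diamond Fm X Y {..<Suc n} \<alpha> v = 0"
    by (simp add: K_def)
qed

end

lemma finite_occs: "finite (occs P)"
  and card_occs: "card (occs P) = size P"
proof -
  have occs: "occs P = Sigma (set_mset P) (\<lambda>p. {..<count P p})"
    unfolding occs_def by auto
  then show "finite (occs P)"
    by simp
  show "card (occs P) = size P"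
    unfolding occs by (simp add: size_multiset_overloaded_eq)
qed

lemma passage_map_hom:
  assumes "is_maze X Y P" "q \<in> occs P"
  shows "passage_map (fst q) \<in> hom X Y"
proof -
  obtain x y b j where q: "q = ((x, y, b), j)"
    by (metis prod.exhaust)
  then have "x \<in> X" "y \<in> Y"
    using assms unfolding is_maze_def occs_def by auto
  then show ?thesis
    unfolding q passage_map_def by (simp add: sigma_hom)
qed

definition identity_maze :: "nat set \<Rightarrow> 'b::one passage multiset" where
  "identity_maze X = mset_set ((\<lambda>x. (x, x, 1)) ` X)"

lemma inj_identity_passage: "inj (\<lambda>x. (x, x, 1))"
  by (rule injI) simp

lemma is_maze_identity_maze: "finite X \<Longrightarrow> is_maze X X (identity_maze X)"
  unfolding is_maze_def identity_maze_def by auto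

lemma size_identity_maze: "finite X \<Longrightarrow> size (identity_maze X) = card X"
  unfolding identity_maze_def
  by (simp add: card_image inj_on_subset[OF inj_identity_passage])

lemma Phi_maze_identity_maze:
  assumes "finite X"
  shows "Phi_maze Fm X X (identity_maze X) v = diamond Fm X X X proj v"
proof -
  have occs: "occs (identity_maze X) = (\<lambda>x. ((x, x, 1), 0)) ` X"
    using assms unfolding occs_def identity_maze_def by (auto simp: count_mset_set')
  have bij: "bij_betw (\<lambda>x. ((x, x, 1), 0)) X (occs (identity_maze X))"
    unfolding occs by (auto simp: bij_betw_def inj_on_def)
  show ?thesis
    unfolding Phi_maze_def diamond_reindex[OF bij] by (simp add: comp_def passage_map_def)
qed

context mod_functor
begin

lemma Phi_maze_eq_0_if_poly_deg_le:
  assumes "poly_deg_le Fo Fm n" "finite X" "finite Y" "is_maze X Y P" "size P > n" "v \<in> cr Fo Fm X"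
  shows "Phi_maze Fm X Y P v = 0"
  unfolding Phi_maze_def
  using assms(1-3) finite_occs
proof (rule diamond_eq_0_if_poly_deg_le)
  show "card (occs P) > n"
    using assms(5) by (simp add: card_occs)
  show "v \<in> Fo X"
    using assms(6) cr_subset[OF assms(2)] by blast
qed (use assms(4) passage_map_hom in blast)

lemma cr_zero_if_Phi_maze_zero:
  assumes Phi_zero: "\<And>Y P. finite Y \<Longrightarrow> is_maze X Y P \<Longrightarrow> size P > n \<Longrightarrow>
      \<forall>v\<in>cr Fo Fm X. Phi_maze Fm X Y P v = 0"
    and "finite X" "card X > n"
  shows "cr Fo Fm X = {0}"
  unfolding cr_eq_zero_iff[OF assms(2)]
proof
  fix u
  assume "u \<in> cr Fo Fm X"
  moreover have "Phi_maze Fm X X (identity_maze X) u = 0"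
    using Phi_zero assms(2,3) \<open>u \<in> cr Fo Fm X\<close>
    by (simp add: is_maze_identity_maze size_identity_maze)
  ultimately show "u = 0"
    using diamond_proj_cr[OF assms(2)] Phi_maze_identity_maze[OF assms(2), of Fm u] by simp
qed

end

theorem mainTheorem2:
  fixes Fo :: "nat set \<Rightarrow> 'v::ab_group_add set"
    and act :: "nat set \<Rightarrow> 'v \<Rightarrow> 'b::ring_1 \<Rightarrow> 'v"
    and Fm :: "nat set \<Rightarrow> nat set \<Rightarrow> 'b mat \<Rightarrow> 'v \<Rightarrow> 'v"
    and n :: nat
  assumes "module_functor Fo act Fm"
  shows "(poly_deg_le Fo Fm n \<longleftrightarrow>
            (\<forall>X. finite X \<and> card X > n \<longrightarrow> cr Fo Fm X = {0}))
       \<and> (poly_deg_le Fo Fm n \<longleftrightarrow>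
            (\<forall>X Y P. finite X \<and> finite Y \<and> is_maze X Y P \<and> size P > n \<longrightarrow>
               (\<forall>v\<in>cr Fo Fm X. Phi_maze Fm X Y P v = 0)))"
proof -
  interpret mod_functor Fo act Fm
    by (rule mod_functor.intro[OF assms])
  have cr: "poly_deg_le Fo Fm n \<longleftrightarrow> (\<forall>X. finite X \<and> card X > n \<longrightarrow> cr Fo Fm X = {0})"
    using cr_eq_zero_if_poly_deg_le poly_deg_le_if_cr_zero by auto
  have "poly_deg_le Fo Fm n \<longleftrightarrow>
      (\<forall>X Y P. finite X \<and> finite Y \<and> is_maze X Y P \<and> size P > n \<longrightarrow>
         (\<forall>v\<in>cr Fo Fm X. Phi_maze Fm X Y P v = 0))"
  proof
    show "poly_deg_le Fo Fm n \<Longrightarrow> \<forall>X Y P. finite X \<and> finite Y \<and> is_maze X Y P \<and> size P > n \<longrightarrow>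
        (\<forall>v\<in>cr Fo Fm X. Phi_maze Fm X Y P v = 0)"
      using Phi_maze_eq_0_if_poly_deg_le by auto
    assume "\<forall>X Y P. finite X \<and> finite Y \<and> is_maze X Y P \<and> size P > n \<longrightarrow>
        (\<forall>v\<in>cr Fo Fm X. Phi_maze Fm X Y P v = 0)"
    then have "cr Fo Fm X = {0}" if "finite X" "card X > n" for X
      using that by (intro cr_zero_if_Phi_maze_zero) auto
    then show "poly_deg_le Fo Fm n"
      by (rule poly_deg_le_if_cr_zero)
  qed
  with cr show ?thesis
    by blast
qed

end
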